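(* Let $b\ge0$ and $0=x_0\le x_1\le\dots\le x_{n-1}\le x_n=b$. Let $f_j:[x_{j-1},x_j]\to\mathbb F$ be continuous for $j=1,\dots,n$, and let $c_k^j$ ($j=0,\dots,n-1$, $k=0,\dots,j$) be positive real constants with $c_0^j=1$. Then there exists a sequence of polynomials $(p_m)_{m\in\mathbb N}$ such that, for every $j=1,\dots,n$, $$\sum_{k=0}^{j-1}c_k^{j-1}p_m^{(k)}\longrightarrow f_j\quad\text{uniformly on }[x_{j-1},x_j]\text{ as }m\to\infty,$$ i.e. $p_m\to f_1$ on $[x_0,x_1]$, $p_m+c_1^1p_m'\to f_2$ on $[x_1,x_2]$, $\dots$, $p_m+c_1^{n-1}p_m'+\dots+c_{n-1}^{n-1}p_m^{(n-1)}\to f_n$ on $[x_{n-1},x_n]$.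
   Context: $\mathbb F\in\{\mathbb R,\mathbb C\}$. Intervals $[x_{j-1},x_j]$ may be degenerate (single points), in which case uniform convergence on them means convergence at that point. *)

theory Defs
  imports "HOL-Analysis.Analysis" "HOL-Computational_Algebra.Polynomial"
begin

end

theory Submission
  imports Defs
begin

(* Induction on the number of intervals. Suppose p approximates the first n pieces and let
   L = sum_{k<=n} c_n_k D^k. One adds a polynomial r whose derivatives of order < n are uniformly
   small on [x_0, x_n], so that the earlier approximations survive, while L r approximates
   f_{n+1} - L p on [x_n, x_{n+1}].
   Since c_n_0 = 1, L minus the identity lowers the degree, so L maps the polynomials onto
   themselves and a Weierstrass approximant of the target is L s for a polynomial s. Subtracting
   a truncated power series solution y of L y = 0 with the same derivatives as s at x_n gives r0
   whose derivatives of order < n vanish at x_n. Finally the n-th derivative of r0 is cut off to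
   the left of x_n, approximated by a polynomial and integrated n times from x_n; this is r.
   The complex case follows by treating real and imaginary parts separately. *)

section \<open>Polynomial approximation and calculus\<close>

lemma Weierstrass_real_poly:
  fixes f :: "real \<Rightarrow> real"
  assumes "compact S" "continuous_on S f" "0 < e"
  obtains p where "\<And>t. t \<in> S \<Longrightarrow> \<bar>f t - poly p t\<bar> < e"
proof -
  obtain g where g: "real_polynomial_function g" "\<And>t. t \<in> S \<Longrightarrow> \<bar>f t - g t\<bar> < e"
    using Stone_Weierstrass_real_polynomial_function[OF assms] by blast
  obtain a n where "g = (\<lambda>t. \<Sum>i\<le>n. a i * t ^ i)"
    using real_polynomial_function_imp_sum[OF g(1)] by blast
  then have "g t = poly (\<Sum>i\<le>n. monom (a i) i) t" for t
    by (simp add: poly_sum poly_monom)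
  then show ?thesis using g(2) that by auto
qed

lemma higher_pderiv_diff:
  "(pderiv ^^ n) (p - q) = (pderiv ^^ n) p - (pderiv ^^ n) (q :: 'a::idom poly)"
  by (induction n) (simp_all add: pderiv_diff)

lemma pderiv_sum: "pderiv (sum f A) = (\<Sum>x\<in>A. pderiv (f x))"
  using higher_pderiv_sum[of 1 f A] by simp

lemma pderiv_surj:
  fixes p :: "'a::field_char_0 poly"
  obtains r where "pderiv r = p" "poly r a = 0"
proof -
  define r where "r = (\<Sum>i\<le>degree p. monom (coeff p i / of_nat (Suc i)) (Suc i))"
  have "pderiv r = (\<Sum>i\<le>degree p. monom (coeff p i) i)"
    unfolding r_def pderiv_sum pderiv_monom by (intro sum.cong) (simp_all del: of_nat_Suc)
  also have "\<dots> = p" by (rule poly_as_sum_of_monoms)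
  finally show ?thesis
    by (intro that[of "r - [:poly r a:]"]) (simp_all add: pderiv_diff)
qed

lemma higher_pderiv_surj_zero_data:
  fixes q :: "'a::field_char_0 poly"
  obtains r where "(pderiv ^^ N) r = q" "\<And>k. k < N \<Longrightarrow> poly ((pderiv ^^ k) r) a = 0"
proof (induction N arbitrary: thesis)
  case 0
  then show ?case by simp
next
  case (Suc N)
  obtain r' where r': "(pderiv ^^ N) r' = q" "\<And>k. k < N \<Longrightarrow> poly ((pderiv ^^ k) r') a = 0"
    using Suc.IH by blast
  obtain r where r: "pderiv r = r'" "poly r a = 0" by (rule pderiv_surj)
  have shift: "(pderiv ^^ Suc k) r = (pderiv ^^ k) r'" for k
    using r(1) by (simp add: funpow_Suc_right del: funpow.simps)
  have "poly ((pderiv ^^ k) r) a = 0" if "k < Suc N" for k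
    using that r(2) r'(2) shift by (cases k) auto
  then show ?case using Suc.prems r'(1) shift by metis
qed

lemma abs_poly_diff_le:
  fixes p :: "real poly"
  assumes "\<And>u. u \<in> {lo..hi} \<Longrightarrow> \<bar>poly (pderiv p) u\<bar> \<le> B" "s \<in> {lo..hi}" "t \<in> {lo..hi}"
  shows "\<bar>poly p t - poly p s\<bar> \<le> B * \<bar>t - s\<bar>"
proof -
  have "{min s t..max s t} \<subseteq> {lo..hi}" using assms(2,3) by auto
  then obtain u where u: "u \<in> {lo..hi}" "poly p t - poly p s = (t - s) * poly (pderiv p) u"
    using poly_MVT'[of s t "{lo..hi}" p] by blast
  have "\<bar>poly p t - poly p s\<bar> = \<bar>t - s\<bar> * \<bar>poly (pderiv p) u\<bar>" using u by (simp add: abs_mult)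
  also have "\<dots> \<le> \<bar>t - s\<bar> * B" using assms(1) u(1) by (simp add: mult_left_mono)
  finally show ?thesis by (simp add: mult.commute)
qed

lemma abs_higher_pderiv_le_zero_data:
  fixes p :: "real poly"
  assumes "a \<in> {lo..hi}" "\<And>k. k < N \<Longrightarrow> poly ((pderiv ^^ k) p) a = 0"
    and "\<And>t. t \<in> {lo..hi} \<Longrightarrow> \<bar>poly ((pderiv ^^ N) p) t\<bar> \<le> B"
    and "k \<le> N" "t \<in> {lo..hi}"
  shows "\<bar>poly ((pderiv ^^ k) p) t\<bar> \<le> B * (hi - lo) ^ (N - k)"
proof -
  have "B \<ge> 0" using assms(3)[OF assms(1)] by linarith
  have "\<forall>t\<in>{lo..hi}. \<bar>poly ((pderiv ^^ (N - m)) p) t\<bar> \<le> B * (hi - lo) ^ m" if "m \<le> N" for m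
    using that
  proof (induction m)
    case 0
    then show ?case using assms(3) by simp
  next
    case (Suc m)
    define q where "q = (pderiv ^^ (N - Suc m)) p"
    have "pderiv q = (pderiv ^^ (N - m)) p"
      using Suc.prems by (simp add: q_def Suc_diff_Suc[symmetric] del: Suc_diff_Suc)
    then have q': "\<bar>poly (pderiv q) u\<bar> \<le> B * (hi - lo) ^ m" if "u \<in> {lo..hi}" for u
      using Suc that by simp
    have "poly q a = 0" using assms(2) Suc.prems by (simp add: q_def)
    show ?case
    proof
      fix t assume t: "t \<in> {lo..hi}"
      have "\<bar>poly q t\<bar> \<le> B * (hi - lo) ^ m * \<bar>t - a\<bar>"
        using abs_poly_diff_le[OF q' assms(1) t] \<open>poly q a = 0\<close> by simp
      also have "\<dots> \<le> B * (hi - lo) ^ m * (hi - lo)"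
        using t assms(1) \<open>B \<ge> 0\<close> by (intro mult_left_mono) auto
      finally show "\<bar>poly ((pderiv ^^ (N - Suc m)) p) t\<bar> \<le> B * (hi - lo) ^ Suc m"
        by (simp add: q_def ac_simps)
    qed
  qed
  from this[of "N - k"] assms(4,5) show ?thesis by simp
qed

lemma abs_poly_le_two_slopes:
  fixes p :: "real poly"
  assumes "poly p a = 0" "s \<le> a" "0 \<le> m" "t \<in> {lo..a}"
    and "\<And>u. u \<in> {lo..a} \<Longrightarrow> s \<le> u \<Longrightarrow> \<bar>poly (pderiv p) u\<bar> \<le> M"
    and "\<And>u. u \<in> {lo..a} \<Longrightarrow> u \<le> s \<Longrightarrow> \<bar>poly (pderiv p) u\<bar> \<le> m"
  shows "\<bar>poly p t\<bar> \<le> M * (a - s) + m * (a - lo)"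
proof -
  have steep: "\<bar>poly p u\<bar> \<le> M * (a - s)" if "u \<in> {max lo s..a}" for u
  proof -
    have "\<bar>poly p u - poly p a\<bar> \<le> M * \<bar>u - a\<bar>"
      by (rule abs_poly_diff_le[of "max lo s" a]) (use assms(5) that in auto)
    moreover have "M \<ge> 0" using assms(5)[of a] assms(2,4) by fastforce
    moreover have "\<bar>u - a\<bar> \<le> a - s" using that by auto
    ultimately show ?thesis
      using assms(1) mult_left_mono[of "\<bar>u - a\<bar>" "a - s" M] by simp
  qed
  show ?thesis
  proof (cases "s \<le> t")
    case True
    then show ?thesis using steep[of t] assms(3,4) by (simp add: add_increasing2)
  next
    case False
    then have s: "s \<in> {lo..a}" using assms(2,4) by auto
    have "\<bar>poly p t - poly p s\<bar> \<le> m * \<bar>t - s\<bar>"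
      by (rule abs_poly_diff_le[of lo s]) (use assms(6) s False assms(4) in auto)
    also have "\<dots> \<le> m * (a - lo)" using s assms(3,4) by (intro mult_left_mono) auto
    moreover have "\<bar>poly p s\<bar> \<le> M * (a - s)" using steep s by simp
    ultimately show ?thesis by linarith
  qed
qed

section \<open>Linear differential operators with constant coefficients\<close>

definition diff_op ::
    "(nat \<Rightarrow> 'a::{comm_semiring_1,semiring_no_zero_divisors}) \<Rightarrow> nat \<Rightarrow> 'a poly \<Rightarrow> 'a poly"
  where "diff_op c N p = (\<Sum>k\<le>N. smult (c k) ((pderiv ^^ k) p))"

lemma poly_diff_op: "poly (diff_op c N p) t = (\<Sum>k\<le>N. c k * poly ((pderiv ^^ k) p) t)"
  by (simp add: diff_op_def poly_sum)

lemma diff_op_add: "diff_op c N (p + q) = diff_op c N p + diff_op c N q"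
  by (simp add: diff_op_def higher_pderiv_add smult_add_right sum.distrib)

lemma diff_op_diff: "diff_op c N (p - q) = diff_op c N p - diff_op c N (q :: 'a::idom poly)"
  by (simp add: diff_op_def higher_pderiv_diff smult_diff_right sum_subtractf)

lemma diff_op_minus_self:
  fixes p :: "'a::idom poly"
  assumes "c 0 = 1"
  shows "diff_op c N p - p = pderiv (\<Sum>k<N. smult (c (Suc k)) ((pderiv ^^ k) p))"
  using assms by (simp add: diff_op_def sum.atMost_shift pderiv_sum pderiv_smult)

lemma diff_op_surj:
  fixes h :: "'a::{idom,semiring_char_0} poly"
  assumes "c 0 = 1"
  obtains s where "diff_op c N s = h"
proof (induction "degree h" arbitrary: h thesis rule: less_induct)
  case less
  define G where "G = (\<Sum>k<N. smult (c (Suc k)) ((pderiv ^^ k) h))"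
  have G: "diff_op c N h - h = pderiv G" unfolding G_def by (rule diff_op_minus_self[of c, OF assms])
  have "degree G \<le> degree h"
    unfolding G_def by (intro degree_sum_le order.trans[OF degree_smult_le])
      (simp_all add: degree_higher_pderiv)
  show ?case
  proof (cases "degree h = 0")
    case True
    then have "pderiv G = 0" using \<open>degree G \<le> degree h\<close> by (simp add: pderiv_eq_0_iff)
    then show ?thesis using G less.prems[of h] by simp
  next
    case False
    then have "degree (pderiv G) < degree h"
      using \<open>degree G \<le> degree h\<close> by (simp add: degree_pderiv)
    then obtain s where "diff_op c N s = pderiv G" using less.hyps by blast
    then have "diff_op c N (h - s) = h" using G by (simp add: diff_op_diff algebra_simps)
    then show ?thesis by (rule less.prems)
  qed
qed

lemma abs_sum_mult_le:
  fixes c x :: "'i \<Rightarrow> real"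
  assumes "\<And>k. k \<in> K \<Longrightarrow> \<bar>x k\<bar> \<le> B"
  shows "\<bar>\<Sum>k\<in>K. c k * x k\<bar> \<le> (\<Sum>k\<in>K. \<bar>c k\<bar>) * B"
proof -
  have "\<bar>\<Sum>k\<in>K. c k * x k\<bar> \<le> (\<Sum>k\<in>K. \<bar>c k\<bar> * \<bar>x k\<bar>)"
    unfolding abs_mult[symmetric] by (rule sum_abs)
  also have "\<dots> \<le> (\<Sum>k\<in>K. \<bar>c k\<bar> * B)"
    using assms by (intro sum_mono mult_left_mono) auto
  finally show ?thesis by (simp add: sum_distrib_right)
qed

lemma abs_poly_diff_op_le:
  fixes p :: "real poly"
  assumes "\<And>k. k \<le> N \<Longrightarrow> \<bar>poly ((pderiv ^^ k) p) t\<bar> \<le> B"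
  shows "\<bar>poly (diff_op c N p) t\<bar> \<le> (\<Sum>k\<le>N. \<bar>c k\<bar>) * B"
  unfolding poly_diff_op using assms by (intro abs_sum_mult_le) simp

section \<open>Power series solutions of the homogeneous equation\<close>

(* Taylor coefficients at a of the solution of diff_op c N y = 0 with y^(i)(a) = d i for i < N. *)
function recurrent_seq :: "(nat \<Rightarrow> 'a::field) \<Rightarrow> nat \<Rightarrow> (nat \<Rightarrow> 'a) \<Rightarrow> nat \<Rightarrow> 'a" where
  "recurrent_seq c N d i =
    (if i < N then d i else - (\<Sum>k<N. c k * recurrent_seq c N d (i - N + k)) / c N)"
  by auto
termination by (relation "Wellfounded.measure (\<lambda>(c, N, d, i). i)") auto

declare recurrent_seq.simps [simp del]

lemma recurrent_seq_initial: "i < N \<Longrightarrow> recurrent_seq c N d i = d i"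
  by (simp add: recurrent_seq.simps)

lemma recurrent_seq_recurrence:
  assumes "c N \<noteq> 0"
  shows "(\<Sum>k\<le>N. c k * recurrent_seq c N d (i + k)) = 0"
proof -
  have "c N * recurrent_seq c N d (i + N) = - (\<Sum>k<N. c k * recurrent_seq c N d (i + k))"
    using assms by (subst recurrent_seq.simps) simp
  then show ?thesis by (simp add: lessThan_Suc_atMost[symmetric])
qed

lemma abs_recurrent_seq_le:
  fixes c d :: "nat \<Rightarrow> real"
  assumes "c N \<noteq> 0" "\<And>i. i < N \<Longrightarrow> \<bar>d i\<bar> \<le> A" "0 \<le> A"
  defines "R \<equiv> max 1 (\<Sum>k<N. \<bar>c k\<bar> / \<bar>c N\<bar>)"
  shows "\<bar>recurrent_seq c N d i\<bar> \<le> A * R ^ i"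
proof (induction i rule: less_induct)
  case (less i)
  have "R \<ge> 1" by (simp add: R_def)
  show ?case
  proof (cases "i < N")
    case True
    then show ?thesis
      using assms(2)[OF True] mult_left_mono[OF one_le_power[OF \<open>R \<ge> 1\<close>] assms(3), of i]
      by (simp add: recurrent_seq_initial)
  next
    case False
    let ?s = "recurrent_seq c N d"
    have "\<bar>?s i\<bar> = \<bar>\<Sum>k<N. c k * ?s (i - N + k)\<bar> / \<bar>c N\<bar>"
      using False by (subst recurrent_seq.simps) simp
    also have "\<dots> \<le> (\<Sum>k<N. \<bar>c k * ?s (i - N + k)\<bar>) / \<bar>c N\<bar>"
      by (intro divide_right_mono sum_abs) simp
    also have "\<dots> = (\<Sum>k<N. \<bar>c k\<bar> / \<bar>c N\<bar> * \<bar>?s (i - N + k)\<bar>)"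
      by (simp add: sum_divide_distrib abs_mult)
    also have "\<dots> \<le> (\<Sum>k<N. \<bar>c k\<bar> / \<bar>c N\<bar> * (A * R ^ (i - 1)))"
    proof (intro sum_mono mult_left_mono)
      fix k assume "k \<in> {..<N}"
      then have "i - N + k < i" "i - N + k \<le> i - 1" using False by auto
      then show "\<bar>?s (i - N + k)\<bar> \<le> A * R ^ (i - 1)"
        using less.IH \<open>R \<ge> 1\<close> assms(3) by (meson mult_left_mono order_trans power_increasing)
    qed simp
    also have "\<dots> = (\<Sum>k<N. \<bar>c k\<bar> / \<bar>c N\<bar>) * (A * R ^ (i - 1))"
      by (rule sum_distrib_right[symmetric])
    also have "\<dots> \<le> R * (A * R ^ (i - 1))"
      using \<open>R \<ge> 1\<close> assms(3) unfolding R_def by (intro mult_right_mono) auto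
    also have "\<dots> = A * R ^ i"
      using False by (cases i) (auto simp: R_def)
    finally show ?thesis .
  qed
qed

definition taylor_poly :: "(nat \<Rightarrow> 'a::field_char_0) \<Rightarrow> nat \<Rightarrow> 'a \<Rightarrow> 'a poly"
  where "taylor_poly \<alpha> M a = (\<Sum>i<M. smult (\<alpha> i / fact i) ([:-a, 1:] ^ i))"

lemma poly_taylor_poly: "poly (taylor_poly \<alpha> M a) t = (\<Sum>i<M. \<alpha> i / fact i * (t - a) ^ i)"
  by (simp add: taylor_poly_def poly_sum poly_power)

lemma pderiv_taylor_poly: "pderiv (taylor_poly \<alpha> M a) = taylor_poly (\<lambda>i. \<alpha> (Suc i)) (M - 1) a"
proof (cases M)
  case (Suc M')
  have "pderiv (smult (\<alpha> (Suc i) / fact (Suc i)) ([:-a, 1:] ^ Suc i))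
      = smult (\<alpha> (Suc i) / fact i) ([:-a, 1:] ^ i)" for i
    by (simp add: pderiv_smult pderiv_power_Suc pderiv_pCons fact_Suc field_simps
        del: power_Suc of_nat_Suc)
  then show ?thesis
    unfolding taylor_poly_def Suc sum.lessThan_Suc_shift pderiv_add pderiv_sum by simp
qed (simp add: taylor_poly_def)

lemma higher_pderiv_taylor_poly:
  "(pderiv ^^ k) (taylor_poly \<alpha> M a) = taylor_poly (\<lambda>i. \<alpha> (i + k)) (M - k) a"
  by (induction k arbitrary: \<alpha> M) (simp_all add: funpow_Suc_right pderiv_taylor_poly del: funpow.simps)

lemma poly_taylor_poly_center: "k < M \<Longrightarrow> poly ((pderiv ^^ k) (taylor_poly \<alpha> M a)) a = \<alpha> k"
  by (cases "M - k") (simp_all add: higher_pderiv_taylor_poly poly_taylor_poly sum.lessThan_Suc_shift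
      del: sum.lessThan_Suc)

lemma poly_diff_op_taylor_recurrent_seq:
  fixes c d :: "nat \<Rightarrow> 'a::field_char_0"
  assumes "c N \<noteq> 0"
  defines "\<alpha> \<equiv> recurrent_seq c N d"
  shows "poly (diff_op c N (taylor_poly \<alpha> (M + N) a)) t
       = (\<Sum>k\<le>N. c k * (\<Sum>i\<in>{M..<M + N - k}. \<alpha> (i + k) / fact i * (t - a) ^ i))"
proof -
  define G where "G k i = \<alpha> (i + k) / fact i * (t - a) ^ i" for k i
  have split: "(\<Sum>i<M + N - k. G k i) = (\<Sum>i<M. G k i) + (\<Sum>i\<in>{M..<M + N - k}. G k i)"
    if "k \<le> N" for k
    using that by (simp add: atLeast0LessThan[symmetric] sum.atLeastLessThan_concat)
  have "(\<Sum>k\<le>N. c k * (\<Sum>i<M. G k i)) = (\<Sum>i<M. (t - a) ^ i / fact i * (\<Sum>k\<le>N. c k * \<alpha> (i + k)))"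
    by (simp add: G_def sum_distrib_left ac_simps sum.swap[of _ "{..N}"])
  also have "\<dots> = 0"
    using recurrent_seq_recurrence[of c N, OF assms(1)] by (simp add: \<alpha>_def)
  finally have cancel: "(\<Sum>k\<le>N. c k * (\<Sum>i<M. G k i)) = 0" .
  have "poly (diff_op c N (taylor_poly \<alpha> (M + N) a)) t = (\<Sum>k\<le>N. c k * (\<Sum>i<M + N - k. G k i))"
    by (simp add: poly_diff_op higher_pderiv_taylor_poly poly_taylor_poly G_def)
  also have "\<dots> = (\<Sum>k\<le>N. c k * (\<Sum>i<M. G k i)) + (\<Sum>k\<le>N. c k * (\<Sum>i\<in>{M..<M + N - k}. G k i))"
    by (simp add: split distrib_left sum.distrib)
  finally show ?thesis using cancel by (simp add: G_def)
qed

lemma recurrent_seq_taylor_terms_small: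
  fixes c d :: "nat \<Rightarrow> real"
  assumes "c N \<noteq> 0" "0 < \<eta>"
  obtains M where "\<And>i k \<tau>. M \<le> i \<Longrightarrow> k \<le> N \<Longrightarrow> \<bar>\<tau>\<bar> \<le> B \<Longrightarrow>
    \<bar>recurrent_seq c N d (i + k) / fact i * \<tau> ^ i\<bar> \<le> \<eta>"
proof -
  define A where "A = (\<Sum>i<N. \<bar>d i\<bar>)"
  define R where "R = max 1 (\<Sum>k<N. \<bar>c k\<bar> / \<bar>c N\<bar>)"
  have "A \<ge> 0" "R \<ge> 1" by (simp_all add: A_def R_def sum_nonneg)
  then have "A * R ^ N + 1 > 0" by (intro add_nonneg_pos) auto
  have seq_le: "\<bar>recurrent_seq c N d i\<bar> \<le> A * R ^ i" for i
    unfolding R_def using assms(1) \<open>A \<ge> 0\<close>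
    by (intro abs_recurrent_seq_le) (auto simp: A_def intro: member_le_sum)
  have "(\<lambda>i. (R * B) ^ i / fact i) \<longlonglongrightarrow> 0"
    using summable_LIMSEQ_zero[OF summable_exp[of "R * B"]] by (simp add: divide_inverse mult.commute)
  moreover have "0 < \<eta> / (A * R ^ N + 1)" using assms(2) \<open>A * R ^ N + 1 > 0\<close> by simp
  ultimately obtain M where M: "\<And>i. i \<ge> M \<Longrightarrow> (R * B) ^ i / fact i \<le> \<eta> / (A * R ^ N + 1)"
    using order_tendstoD(2) by (force simp: eventually_sequentially)
  show ?thesis
  proof (rule that)
    fix i k \<tau> assume "M \<le> i" "k \<le> N" "\<bar>\<tau>\<bar> \<le> B"
    have "A * R ^ k \<le> A * R ^ N + 1"
      using mult_left_mono[OF power_increasing[OF \<open>k \<le> N\<close> \<open>R \<ge> 1\<close>] \<open>A \<ge> 0\<close>] by linarith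
    have "\<bar>recurrent_seq c N d (i + k) / fact i * \<tau> ^ i\<bar> \<le> A * R ^ (i + k) * B ^ i / fact i"
      using \<open>\<bar>\<tau>\<bar> \<le> B\<close> \<open>A \<ge> 0\<close> \<open>R \<ge> 1\<close>
      by (auto simp: abs_mult power_abs intro!: divide_right_mono mult_mono seq_le power_mono)
    also have "\<dots> = A * R ^ k * ((R * B) ^ i / fact i)"
      by (simp add: power_add power_mult_distrib)
    also have "\<dots> \<le> (A * R ^ N + 1) * (\<eta> / (A * R ^ N + 1))"
      using \<open>A * R ^ k \<le> A * R ^ N + 1\<close> M[OF \<open>M \<le> i\<close>] \<open>A \<ge> 0\<close> \<open>R \<ge> 1\<close> \<open>\<bar>\<tau>\<bar> \<le> B\<close>
      by (intro mult_mono) auto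
    also have "\<dots> = \<eta>" using \<open>A * R ^ N + 1 > 0\<close> by simp
    finally show "\<bar>recurrent_seq c N d (i + k) / fact i * \<tau> ^ i\<bar> \<le> \<eta>" .
  qed
qed

lemma approx_homogeneous_solution:
  fixes c d :: "nat \<Rightarrow> real"
  assumes "c N \<noteq> 0" "a \<le> b" "0 < \<epsilon>"
  obtains y where "\<And>k. k < N \<Longrightarrow> poly ((pderiv ^^ k) y) a = d k"
    and "\<And>t. t \<in> {a..b} \<Longrightarrow> \<bar>poly (diff_op c N y) t\<bar> \<le> \<epsilon>"
proof -
  define C where "C = (\<Sum>k\<le>N. \<bar>c k\<bar>)"
  have "C * N \<ge> 0" by (simp add: C_def sum_nonneg)
  then obtain M where M: "\<And>i k \<tau>. M \<le> i \<Longrightarrow> k \<le> N \<Longrightarrow> \<bar>\<tau>\<bar> \<le> b - a \<Longrightarrow>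
      \<bar>recurrent_seq c N d (i + k) / fact i * \<tau> ^ i\<bar> \<le> \<epsilon> / (C * N + 1)"
    using recurrent_seq_taylor_terms_small[where c = c and N = N and \<eta> = "\<epsilon> / (C * N + 1)"]
      assms(1,3)
    by (metis add_nonneg_pos divide_pos_pos zero_less_one)
  define y where "y = taylor_poly (recurrent_seq c N d) (M + N) a"
  show ?thesis
  proof (rule that)
    show "poly ((pderiv ^^ k) y) a = d k" if "k < N" for k
      using that by (simp add: y_def poly_taylor_poly_center recurrent_seq_initial)
  next
    fix t assume t: "t \<in> {a..b}"
    have "\<bar>\<Sum>i\<in>{M..<M + N - k}. recurrent_seq c N d (i + k) / fact i * (t - a) ^ i\<bar>
        \<le> N * (\<epsilon> / (C * N + 1))" if "k \<le> N" for k
    proof -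
      have "\<bar>\<Sum>i\<in>{M..<M + N - k}. recurrent_seq c N d (i + k) / fact i * (t - a) ^ i\<bar>
          \<le> (N - k) * (\<epsilon> / (C * N + 1))"
        using sum_norm_bound[where S = "{M..<M + N - k}" and K = "\<epsilon> / (C * N + 1)"
            and f = "\<lambda>i. recurrent_seq c N d (i + k) / fact i * (t - a) ^ i"] M that t
        by force
      also have "\<dots> \<le> N * (\<epsilon> / (C * N + 1))"
        using \<open>C * N \<ge> 0\<close> assms(3) by (intro mult_right_mono) auto
      finally show ?thesis .
    qed
    then have "\<bar>poly (diff_op c N y) t\<bar> \<le> C * (N * (\<epsilon> / (C * N + 1)))"
      unfolding y_def poly_diff_op_taylor_recurrent_seq[of c N, OF assms(1)] C_def
      by (intro abs_sum_mult_le) simp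
    also have "\<dots> \<le> \<epsilon>"
      using \<open>C * N \<ge> 0\<close> assms(3) by (simp add: field_simps)
    finally show "\<bar>poly (diff_op c N y) t\<bar> \<le> \<epsilon>" .
  qed
qed

lemma approx_solution_zero_data:
  fixes c :: "nat \<Rightarrow> real" and g :: "real \<Rightarrow> real"
  assumes "c 0 = 1" "c N \<noteq> 0" "a \<le> b" "continuous_on {a..b} g" "0 < \<epsilon>"
  obtains r where "\<And>k. k < N \<Longrightarrow> poly ((pderiv ^^ k) r) a = 0"
    and "\<And>t. t \<in> {a..b} \<Longrightarrow> \<bar>poly (diff_op c N r) t - g t\<bar> \<le> \<epsilon>"
proof -
  obtain h where h: "\<And>t. t \<in> {a..b} \<Longrightarrow> \<bar>g t - poly h t\<bar> < \<epsilon> / 2"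
    using Weierstrass_real_poly[OF compact_Icc assms(4)] assms(5) by (metis half_gt_zero)
  obtain s where s: "diff_op c N s = h" using diff_op_surj[of c, OF assms(1)] .
  obtain y where y: "\<And>k. k < N \<Longrightarrow> poly ((pderiv ^^ k) y) a = poly ((pderiv ^^ k) s) a"
    and Ly: "\<And>t. t \<in> {a..b} \<Longrightarrow> \<bar>poly (diff_op c N y) t\<bar> \<le> \<epsilon> / 2"
    using approx_homogeneous_solution[where c = c and N = N and a = a and b = b and \<epsilon> = "\<epsilon> / 2"
        and d = "\<lambda>k. poly ((pderiv ^^ k) s) a"] assms(2,3,5) by auto
  show ?thesis
  proof (rule that[of "s - y"])
    show "poly ((pderiv ^^ k) (s - y)) a = 0" if "k < N" for k
      using y[OF that] by (simp add: higher_pderiv_diff)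
    fix t assume t: "t \<in> {a..b}"
    have "poly (diff_op c N (s - y)) t - g t = (poly h t - g t) - poly (diff_op c N y) t"
      by (simp add: diff_op_diff s)
    then show "\<bar>poly (diff_op c N (s - y)) t - g t\<bar> \<le> \<epsilon>"
      using h[OF t] Ly[OF t] by linarith
  qed
qed

section \<open>Approximation on a single interval\<close>

lemma abs_higher_pderiv_le_two_slopes:
  fixes r :: "real poly"
  assumes "\<And>k. k < N \<Longrightarrow> poly ((pderiv ^^ k) r) a = 0" "s \<le> a" "0 \<le> m"
    and "\<And>u. u \<in> {lo..a} \<Longrightarrow> \<bar>poly ((pderiv ^^ N) r) u\<bar> \<le> M"
    and "\<And>u. u \<in> {lo..a} \<Longrightarrow> u \<le> s \<Longrightarrow> \<bar>poly ((pderiv ^^ N) r) u\<bar> \<le> m"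
    and "k < N" "t \<in> {lo..a}"
  shows "\<bar>poly ((pderiv ^^ k) r) t\<bar> \<le> (M * (a - s) + m * (a - lo)) * (a - lo) ^ (N - Suc k)"
proof -
  obtain N' where N': "N = Suc N'" "k \<le> N'" using assms(6) by (cases N) auto
  have "\<bar>poly ((pderiv ^^ N') r) u\<bar> \<le> M * (a - s) + m * (a - lo)" if "u \<in> {lo..a}" for u
    using assms(1)[of N'] assms(2-5) N'(1) that by (intro abs_poly_le_two_slopes) auto
  then have "\<bar>poly ((pderiv ^^ k) r) t\<bar> \<le> (M * (a - s) + m * (a - lo)) * (a - lo) ^ (N' - k)"
    using assms(1,7) N' by (intro abs_higher_pderiv_le_zero_data[of a lo a N' r]) auto
  then show ?thesis using N'(1) by simp
qed

lemma poly_approx_cutoff: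
  fixes P :: "real poly"
  assumes "0 < \<rho>"
  obtains Q where "\<And>u. u \<in> {a..b} \<Longrightarrow> \<bar>poly Q u - poly P u\<bar> \<le> \<rho>"
    and "\<And>u. u \<in> {lo..a} \<Longrightarrow> \<bar>poly Q u\<bar> \<le> \<bar>poly P a\<bar> + \<rho>"
    and "\<And>u. u \<in> {lo..a} \<Longrightarrow> u \<le> a - \<rho> \<Longrightarrow> \<bar>poly Q u\<bar> \<le> \<rho>"
proof -
  define \<psi> where "\<psi> u = poly P (max u a) * min 1 (max 0 (1 + (u - a) / \<rho>))" for u
  have "continuous_on ({lo..a} \<union> {a..b}) \<psi>"
    unfolding \<psi>_def using assms by (intro continuous_intros) auto
  then obtain Q where Q: "\<And>u. u \<in> {lo..a} \<union> {a..b} \<Longrightarrow> \<bar>\<psi> u - poly Q u\<bar> < \<rho>"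
    using Weierstrass_real_poly[OF compact_Un[OF compact_Icc compact_Icc]] assms by metis
  show ?thesis
  proof (rule that)
    show "\<bar>poly Q u - poly P u\<bar> \<le> \<rho>" if "u \<in> {a..b}" for u
      using Q[of u] that assms by (simp add: \<psi>_def)
    show "\<bar>poly Q u\<bar> \<le> \<bar>poly P a\<bar> + \<rho>" if "u \<in> {lo..a}" for u
    proof -
      have "\<bar>\<psi> u\<bar> \<le> \<bar>poly P a\<bar>" using that by (simp add: \<psi>_def abs_mult mult_left_le)
      then show ?thesis using Q[of u] that by force
    qed
    show "\<bar>poly Q u\<bar> \<le> \<rho>" if "u \<in> {lo..a}" "u \<le> a - \<rho>" for u
    proof -
      have "\<psi> u = 0" using that assms by (simp add: \<psi>_def field_simps)
      then show ?thesis using Q[of u] that by force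
    qed
  qed
qed

(* The cut-off Q of the N-th derivative of r0 is small on [lo, a - rho] and bounded on the ramp
   [a - rho, a], so its N-fold antiderivative from a has derivatives of order < N in O(rho). *)
lemma poly_flatten_left:
  fixes r0 :: "real poly"
  assumes "lo \<le> a" "a \<le> b" "\<And>k. k < N \<Longrightarrow> poly ((pderiv ^^ k) r0) a = 0" "0 < \<delta>" "0 < \<eta>"
  obtains r where "\<And>k t. k < N \<Longrightarrow> t \<in> {lo..a} \<Longrightarrow> \<bar>poly ((pderiv ^^ k) r) t\<bar> \<le> \<delta>"
    and "\<And>k t. k \<le> N \<Longrightarrow> t \<in> {a..b} \<Longrightarrow> \<bar>poly ((pderiv ^^ k) (r - r0)) t\<bar> \<le> \<eta>"
proof -
  define P where "P = (pderiv ^^ N) r0"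
  define H where "H = \<bar>poly P a\<bar> + 1 + (b - lo)"
  define \<Lambda> where "\<Lambda> = max 1 (b - lo) ^ N"
  define \<rho> where "\<rho> = min 1 (min \<eta> \<delta> / (H * \<Lambda>))"
  have "H \<ge> 1" "\<Lambda> \<ge> 1" using assms(1,2) by (simp_all add: H_def \<Lambda>_def)
  then have "0 < \<rho>" "\<rho> \<le> 1" using assms(4,5) by (simp_all add: \<rho>_def)
  have "H * \<rho> * \<Lambda> \<le> H * (min \<eta> \<delta> / (H * \<Lambda>)) * \<Lambda>"
    using \<open>H \<ge> 1\<close> \<open>\<Lambda> \<ge> 1\<close> by (intro mult_right_mono mult_left_mono) (auto simp: \<rho>_def)
  then have \<rho>_small: "H * \<rho> * \<Lambda> \<le> min \<eta> \<delta>" using \<open>H \<ge> 1\<close> \<open>\<Lambda> \<ge> 1\<close> by simp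
  have pow_le: "H * \<rho> * x ^ j \<le> min \<eta> \<delta>" if "0 \<le> x" "x \<le> b - lo" "j \<le> N" for x j
  proof -
    have "x ^ j \<le> max 1 (b - lo) ^ j" using that by (intro power_mono) auto
    also have "\<dots> \<le> \<Lambda>" unfolding \<Lambda>_def using that(3) by (intro power_increasing) auto
    finally have "H * \<rho> * x ^ j \<le> H * \<rho> * \<Lambda>"
      using \<open>H \<ge> 1\<close> \<open>0 < \<rho>\<close> by (intro mult_left_mono) auto
    then show ?thesis using \<rho>_small by linarith
  qed
  obtain Q where Q_right: "\<And>u. u \<in> {a..b} \<Longrightarrow> \<bar>poly Q u - poly P u\<bar> \<le> \<rho>"
    and Q_left: "\<And>u. u \<in> {lo..a} \<Longrightarrow> \<bar>poly Q u\<bar> \<le> \<bar>poly P a\<bar> + \<rho>"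
    and Q_far_left: "\<And>u. u \<in> {lo..a} \<Longrightarrow> u \<le> a - \<rho> \<Longrightarrow> \<bar>poly Q u\<bar> \<le> \<rho>"
    using poly_approx_cutoff[OF \<open>0 < \<rho>\<close>] by metis
  obtain r where r: "(pderiv ^^ N) r = Q" "\<And>k. k < N \<Longrightarrow> poly ((pderiv ^^ k) r) a = 0"
    by (rule higher_pderiv_surj_zero_data[where N = N and q = Q and a = a]) auto
  show ?thesis
  proof (rule that)
    fix k t assume "k \<le> N" "t \<in> {a..b}"
    then have "\<bar>poly ((pderiv ^^ k) (r - r0)) t\<bar> \<le> \<rho> * (b - a) ^ (N - k)"
      using assms(2,3) r Q_right
      by (intro abs_higher_pderiv_le_zero_data[of a]) (auto simp: higher_pderiv_diff P_def)
    also have "\<dots> \<le> H * \<rho> * (b - a) ^ (N - k)"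
      using \<open>H \<ge> 1\<close> \<open>0 < \<rho>\<close> assms(2) by (intro mult_right_mono) auto
    finally show "\<bar>poly ((pderiv ^^ k) (r - r0)) t\<bar> \<le> \<eta>"
      using pow_le[of "b - a" "N - k"] assms(1,2) by simp
  next
    fix k t assume "k < N" "t \<in> {lo..a}"
    then have "\<bar>poly ((pderiv ^^ k) r) t\<bar>
        \<le> ((\<bar>poly P a\<bar> + \<rho>) * (a - (a - \<rho>)) + \<rho> * (a - lo)) * (a - lo) ^ (N - Suc k)"
      using r Q_left Q_far_left \<open>0 < \<rho>\<close> by (intro abs_higher_pderiv_le_two_slopes) auto
    also have "\<dots> \<le> H * \<rho> * (a - lo) ^ (N - Suc k)"
    proof (rule mult_right_mono)
      have "\<rho> * \<rho> \<le> \<rho> * 1" "\<rho> * a \<le> \<rho> * b"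
        using \<open>\<rho> \<le> 1\<close> \<open>0 < \<rho>\<close> assms(2) by (intro mult_left_mono; simp)+
      then show "(\<bar>poly P a\<bar> + \<rho>) * (a - (a - \<rho>)) + \<rho> * (a - lo) \<le> H * \<rho>"
        by (simp add: H_def algebra_simps)
    qed (use assms(1) in simp)
    finally show "\<bar>poly ((pderiv ^^ k) r) t\<bar> \<le> \<delta>"
      using pow_le[of "a - lo" "N - Suc k"] assms(1,2) by simp
  qed
qed

lemma approx_solution_flat_left:
  fixes c :: "nat \<Rightarrow> real" and g :: "real \<Rightarrow> real"
  assumes "c 0 = 1" "c N \<noteq> 0" "lo \<le> a" "a \<le> b" "continuous_on {a..b} g" "0 < \<epsilon>" "0 < \<delta>"
  obtains r where "\<And>k t. k < N \<Longrightarrow> t \<in> {lo..a} \<Longrightarrow> \<bar>poly ((pderiv ^^ k) r) t\<bar> \<le> \<delta>"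
    and "\<And>t. t \<in> {a..b} \<Longrightarrow> \<bar>poly (diff_op c N r) t - g t\<bar> \<le> \<epsilon>"
proof -
  obtain r0 where r0: "\<And>k. k < N \<Longrightarrow> poly ((pderiv ^^ k) r0) a = 0"
    and r0_approx: "\<And>t. t \<in> {a..b} \<Longrightarrow> \<bar>poly (diff_op c N r0) t - g t\<bar> \<le> \<epsilon> / 2"
    using approx_solution_zero_data[where c = c and N = N and a = a and b = b and g = g
        and \<epsilon> = "\<epsilon> / 2"] assms(1,2,4,5,6) by auto
  define C where "C = (\<Sum>k\<le>N. \<bar>c k\<bar>)"
  define \<eta> where "\<eta> = \<epsilon> / (2 * (C + 1))"
  have "C \<ge> 0" by (simp add: C_def sum_nonneg)
  then have "\<eta> > 0" "C * \<eta> \<le> \<epsilon> / 2"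
    using assms(6) by (simp_all add: \<eta>_def field_simps)
  obtain r where left: "\<And>k t. k < N \<Longrightarrow> t \<in> {lo..a} \<Longrightarrow> \<bar>poly ((pderiv ^^ k) r) t\<bar> \<le> \<delta>"
    and right: "\<And>k t. k \<le> N \<Longrightarrow> t \<in> {a..b} \<Longrightarrow> \<bar>poly ((pderiv ^^ k) (r - r0)) t\<bar> \<le> \<eta>"
    using poly_flatten_left[OF assms(3,4) r0 assms(7) \<open>\<eta> > 0\<close>] by blast
  show ?thesis
  proof (rule that[OF left])
    fix t assume t: "t \<in> {a..b}"
    have "\<bar>poly (diff_op c N (r - r0)) t\<bar> \<le> C * \<eta>"
      unfolding C_def using right t by (intro abs_poly_diff_op_le)
    moreover have "poly (diff_op c N r) t - g t
        = poly (diff_op c N (r - r0)) t + (poly (diff_op c N r0) t - g t)"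
      by (simp add: diff_op_diff)
    ultimately show "\<bar>poly (diff_op c N r) t - g t\<bar> \<le> \<epsilon>"
      using r0_approx[OF t] \<open>C * \<eta> \<le> \<epsilon> / 2\<close>
        abs_triangle_ineq[of "poly (diff_op c N (r - r0)) t" "poly (diff_op c N r0) t - g t"]
      by linarith
  qed
qed

section \<open>Piecewise approximation\<close>

lemma lift_Suc_mono_le_upto:
  fixes x :: "nat \<Rightarrow> 'a::preorder"
  assumes "\<And>j. j < n \<Longrightarrow> x j \<le> x (Suc j)" "i \<le> j" "j \<le> n"
  shows "x i \<le> x j"
proof -
  have "x (min k n) \<le> x (min (Suc k) n)" for k
    using assms(1)[of k] by (cases "k < n") (auto simp: min_def)
  then show ?thesis using lift_Suc_mono_le[of "\<lambda>k. x (min k n)" i j] assms(2,3) by simp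
qed

lemma piecewise_diff_op_approx:
  fixes x :: "nat \<Rightarrow> real" and c :: "nat \<Rightarrow> nat \<Rightarrow> real" and f :: "nat \<Rightarrow> real \<Rightarrow> real"
  assumes "\<And>j. j < n \<Longrightarrow> x j \<le> x (Suc j)"
    and "\<And>j. j < n \<Longrightarrow> c j 0 = 1" "\<And>j. j < n \<Longrightarrow> c j j \<noteq> 0"
    and "\<And>j. j < n \<Longrightarrow> continuous_on {x j..x (Suc j)} (f j)" and "0 < \<epsilon>"
  shows "\<exists>p. \<forall>j<n. \<forall>t\<in>{x j..x (Suc j)}. \<bar>poly (diff_op (c j) j p) t - f j t\<bar> \<le> \<epsilon>"
  using assms
proof (induction n arbitrary: \<epsilon>)
  case 0
  then show ?case by simp
next
  case (Suc n)
  obtain q where q: "\<forall>j<n. \<forall>t\<in>{x j..x (Suc j)}. \<bar>poly (diff_op (c j) j q) t - f j t\<bar> \<le> \<epsilon> / 2"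
    using Suc.IH[of "\<epsilon> / 2"] Suc.prems by auto
  have x_mono: "x i \<le> x j" if "i \<le> j" "j \<le> Suc n" for i j
    using lift_Suc_mono_le_upto[of "Suc n" x] Suc.prems(1) that by blast
  define C where "C = (\<Sum>j<n. \<Sum>k\<le>j. \<bar>c j k\<bar>)"
  define \<delta> where "\<delta> = \<epsilon> / (2 * (C + 1))"
  have "C \<ge> 0" by (simp add: C_def sum_nonneg)
  then have "\<delta> > 0" "C * \<delta> \<le> \<epsilon> / 2"
    using Suc.prems(5) by (simp_all add: \<delta>_def field_simps)
  define g where "g t = f n t - poly (diff_op (c n) n q) t" for t
  have "continuous_on {x n..x (Suc n)} g"
    unfolding g_def using Suc.prems(4)[of n] by (intro continuous_intros) auto
  then obtain r
    where r_left: "\<And>k t. k < n \<Longrightarrow> t \<in> {x 0..x n} \<Longrightarrow> \<bar>poly ((pderiv ^^ k) r) t\<bar> \<le> \<delta>"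
      and r_right: "\<And>t. t \<in> {x n..x (Suc n)} \<Longrightarrow> \<bar>poly (diff_op (c n) n r) t - g t\<bar> \<le> \<epsilon> / 2"
    using approx_solution_flat_left[of "c n" n "x 0" "x n" "x (Suc n)" g "\<epsilon> / 2" \<delta>]
      Suc.prems x_mono \<open>\<delta> > 0\<close> by auto
  have "\<bar>poly (diff_op (c j) j (q + r)) t - f j t\<bar> \<le> \<epsilon>"
    if "j < Suc n" "t \<in> {x j..x (Suc j)}" for j t
  proof (cases "j = n")
    case True
    then have "poly (diff_op (c j) j (q + r)) t - f j t = poly (diff_op (c n) n r) t - g t"
      by (simp add: diff_op_add g_def)
    then show ?thesis using r_right[of t] that(2) True Suc.prems(5) by simp
  next
    case False
    then have "j < n" using that(1) by simp
    have "t \<in> {x 0..x n}" using that(2) x_mono[of 0 j] x_mono[of "Suc j" n] \<open>j < n\<close> by auto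
    then have "\<bar>poly (diff_op (c j) j r) t\<bar> \<le> (\<Sum>k\<le>j. \<bar>c j k\<bar>) * \<delta>"
      using \<open>j < n\<close> by (intro abs_poly_diff_op_le r_left) auto
    also have "\<dots> \<le> C * \<delta>"
      unfolding C_def using \<open>j < n\<close> \<open>\<delta> > 0\<close>
      by (intro mult_right_mono member_le_sum[of j]) (auto intro: sum_nonneg)
    moreover have "\<bar>poly (diff_op (c j) j q) t - f j t\<bar> \<le> \<epsilon> / 2" using q \<open>j < n\<close> that(2) by blast
    moreover have "poly (diff_op (c j) j (q + r)) t - f j t
        = poly (diff_op (c j) j r) t + (poly (diff_op (c j) j q) t - f j t)"
      by (simp add: diff_op_add)
    ultimately show ?thesis
      using \<open>C * \<delta> \<le> \<epsilon> / 2\<close>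
        abs_triangle_ineq[of "poly (diff_op (c j) j r) t" "poly (diff_op (c j) j q) t - f j t"]
      by linarith
  qed
  then show ?case by blast
qed

lemma higher_pderiv_map_poly_of_real:
  "(pderiv ^^ k) (map_poly complex_of_real p) = map_poly complex_of_real ((pderiv ^^ k) p)"
proof -
  have "pderiv (map_poly complex_of_real q) = map_poly complex_of_real (pderiv q)" for q
    by (rule poly_eqI) (simp add: coeff_pderiv coeff_map_poly)
  then show ?thesis by (induction k) simp_all
qed

lemma poly_map_poly_of_real:
  "poly (map_poly complex_of_real p) (complex_of_real t) = complex_of_real (poly p t)"
  by (induction p) (simp_all add: map_poly_pCons)

lemma poly_diff_op_complexify:
  "poly (diff_op (\<lambda>k. complex_of_real (c k)) N
      (map_poly complex_of_real p + smult \<i> (map_poly complex_of_real q))) (complex_of_real t)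
    = Complex (poly (diff_op c N p) t) (poly (diff_op c N q) t)"
  by (simp add: poly_diff_op higher_pderiv_add higher_pderiv_smult higher_pderiv_map_poly_of_real
      poly_map_poly_of_real Complex_eq sum.distrib sum_distrib_left algebra_simps)

lemma piecewise_diff_op_approx_complex:
  fixes x :: "nat \<Rightarrow> real" and c :: "nat \<Rightarrow> nat \<Rightarrow> real" and f :: "nat \<Rightarrow> real \<Rightarrow> complex"
  assumes "\<And>j. j < n \<Longrightarrow> x j \<le> x (Suc j)"
    and "\<And>j. j < n \<Longrightarrow> c j 0 = 1" "\<And>j. j < n \<Longrightarrow> c j j \<noteq> 0"
    and "\<And>j. j < n \<Longrightarrow> continuous_on {x j..x (Suc j)} (f j)" and "0 < \<epsilon>"
  shows "\<exists>p. \<forall>j<n. \<forall>t\<in>{x j..x (Suc j)}.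
    cmod (poly (diff_op (\<lambda>k. complex_of_real (c j k)) j p) (complex_of_real t) - f j t) \<le> \<epsilon>"
proof -
  have "0 < \<epsilon> / 2" using assms(5) by simp
  obtain p where p: "\<forall>j<n. \<forall>t\<in>{x j..x (Suc j)}.
      \<bar>poly (diff_op (c j) j p) t - Re (f j t)\<bar> \<le> \<epsilon> / 2"
    using piecewise_diff_op_approx[of n x c "\<lambda>j t. Re (f j t)", OF assms(1-3) _ \<open>0 < \<epsilon> / 2\<close>]
      assms(4) continuous_on_Re by blast
  obtain q where q: "\<forall>j<n. \<forall>t\<in>{x j..x (Suc j)}.
      \<bar>poly (diff_op (c j) j q) t - Im (f j t)\<bar> \<le> \<epsilon> / 2"
    using piecewise_diff_op_approx[of n x c "\<lambda>j t. Im (f j t)", OF assms(1-3) _ \<open>0 < \<epsilon> / 2\<close>]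
      assms(4) continuous_on_Im by blast
  have "cmod (Complex (poly (diff_op (c j) j p) t) (poly (diff_op (c j) j q) t) - f j t) \<le> \<epsilon>"
    if "j < n" "t \<in> {x j..x (Suc j)}" for j t
    using cmod_le[of "Complex (poly (diff_op (c j) j p) t) (poly (diff_op (c j) j q) t) - f j t"]
      p q that by fastforce
  then show ?thesis unfolding poly_diff_op_complexify[symmetric] by blast
qed

lemma uniform_limit_of_approximants:
  fixes F :: "'i \<Rightarrow> 'p \<Rightarrow> 'a \<Rightarrow> 'b::metric_space"
  assumes "\<And>\<epsilon>. 0 < \<epsilon> \<Longrightarrow> \<exists>p. \<forall>j\<in>J. \<forall>t\<in>S j. dist (F j p t) (l j t) \<le> \<epsilon>"
  shows "\<exists>P. \<forall>j\<in>J. uniform_limit (S j) (\<lambda>m. F j (P m)) (l j) sequentially"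
proof -
  obtain P where P: "\<And>m. \<forall>j\<in>J. \<forall>t\<in>S j. dist (F j (P m) t) (l j t) \<le> 1 / Suc m"
    using assms[of "1 / Suc _"] by (metis of_nat_0_less_iff zero_less_Suc zero_less_divide_1_iff)
  have "uniform_limit (S j) (\<lambda>m. F j (P m)) (l j) sequentially" if "j \<in> J" for j
  proof (rule uniform_limitI)
    fix e :: real assume "0 < e"
    then obtain m0 where m0: "1 / Suc m0 < e"
      by (metis nat_approx_posE)
    have "dist (F j (P m) t) (l j t) < e" if "m \<ge> m0" "t \<in> S j" for m t
    proof -
      have "1 / real (Suc m) \<le> 1 / Suc m0" using that(1) by (simp add: frac_le)
      then show ?thesis using P[of m] \<open>j \<in> J\<close> that(2) m0 by fastforce
    qed
    then show "\<forall>\<^sub>F m in sequentially. \<forall>t\<in>S j. dist (F j (P m) t) (l j t) < e"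
      unfolding eventually_sequentially by blast
  qed
  then show ?thesis by blast
qed

theorem mainTheorem14:
  fixes b :: real and n :: nat and x :: "nat \<Rightarrow> real" and c :: "nat \<Rightarrow> nat \<Rightarrow> real"
  assumes "b \<ge> 0" and "x 0 = 0" and "x n = b"
    and "\<forall>j<n. x j \<le> x (Suc j)"
    and "\<forall>j<n. \<forall>k\<le>j. c j k > 0"
    and "\<forall>j<n. c j 0 = 1"
  shows "(\<forall>f :: nat \<Rightarrow> real \<Rightarrow> real.
            (\<forall>j\<in>{1..n}. continuous_on {x (j - 1)..x j} (f j)) \<longrightarrow>
            (\<exists>p :: nat \<Rightarrow> real poly. \<forall>j\<in>{1..n}.
               uniform_limit {x (j - 1)..x j}
                 (\<lambda>m t. \<Sum>k<j. c (j - 1) k * poly ((pderiv ^^ k) (p m)) t)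
                 (f j) sequentially))
       \<and> (\<forall>f :: nat \<Rightarrow> real \<Rightarrow> complex.
            (\<forall>j\<in>{1..n}. continuous_on {x (j - 1)..x j} (f j)) \<longrightarrow>
            (\<exists>p :: nat \<Rightarrow> complex poly. \<forall>j\<in>{1..n}.
               uniform_limit {x (j - 1)..x j}
                 (\<lambda>m t. \<Sum>k<j. complex_of_real (c (j - 1) k) * poly ((pderiv ^^ k) (p m)) (complex_of_real t))
                 (f j) sequentially))"
proof -
  have hyps: "\<And>j. j < n \<Longrightarrow> x j \<le> x (Suc j)" "\<And>j. j < n \<Longrightarrow> c j 0 = 1"
    "\<And>j. j < n \<Longrightarrow> c j j \<noteq> 0"
    using assms(4-6) by (auto simp: less_imp_neq[symmetric])
  have pieces: "(\<forall>j\<in>{1..n}. P j) \<longleftrightarrow> (\<forall>i<n. P (Suc i))" for P :: "nat \<Rightarrow> bool"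
    by (metis atLeastAtMost_iff image_Suc_lessThan imageE imageI lessThan_iff)
  show ?thesis
  proof (intro conjI allI impI)
    fix f :: "nat \<Rightarrow> real \<Rightarrow> real"
    assume "\<forall>j\<in>{1..n}. continuous_on {x (j - 1)..x j} (f j)"
    then have "\<And>i. i < n \<Longrightarrow> continuous_on {x i..x (Suc i)} (f (Suc i))"
      unfolding pieces by simp
    then have "\<exists>p. \<forall>j\<in>{1..n}. \<forall>t\<in>{x (j - 1)..x j}.
        dist (\<Sum>k<j. c (j - 1) k * poly ((pderiv ^^ k) p) t) (f j t) \<le> \<epsilon>" if "0 < \<epsilon>" for \<epsilon>
      unfolding pieces using piecewise_diff_op_approx[of n x c "\<lambda>i. f (Suc i)", OF hyps _ that]
      by (simp add: poly_diff_op lessThan_Suc_atMost dist_real_def)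
    then show "\<exists>p. \<forall>j\<in>{1..n}. uniform_limit {x (j - 1)..x j}
        (\<lambda>m t. \<Sum>k<j. c (j - 1) k * poly ((pderiv ^^ k) (p m)) t) (f j) sequentially"
      by (rule uniform_limit_of_approximants)
  next
    fix f :: "nat \<Rightarrow> real \<Rightarrow> complex"
    assume "\<forall>j\<in>{1..n}. continuous_on {x (j - 1)..x j} (f j)"
    then have "\<And>i. i < n \<Longrightarrow> continuous_on {x i..x (Suc i)} (f (Suc i))"
      unfolding pieces by simp
    then have "\<exists>p. \<forall>j\<in>{1..n}. \<forall>t\<in>{x (j - 1)..x j}. dist (\<Sum>k<j. complex_of_real (c (j - 1) k)
        * poly ((pderiv ^^ k) p) (complex_of_real t)) (f j t) \<le> \<epsilon>" if "0 < \<epsilon>" for \<epsilon>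
      unfolding pieces using piecewise_diff_op_approx_complex[of n x c "\<lambda>i. f (Suc i)", OF hyps _ that]
      by (simp add: poly_diff_op lessThan_Suc_atMost dist_norm)
    then show "\<exists>p. \<forall>j\<in>{1..n}. uniform_limit {x (j - 1)..x j}
        (\<lambda>m t. \<Sum>k<j. complex_of_real (c (j - 1) k) * poly ((pderiv ^^ k) (p m)) (complex_of_real t))
        (f j) sequentially"
      by (rule uniform_limit_of_approximants)
  qed
qed

end
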